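(* The set $T$ is a reduced Gröbner basis of $I_\phi=I_{\phi'}\cap\mathbb{K}[x_{i|A}:i\notin A]$ with respect to the restriction of the graded reverse lexicographic order $<$ to $\mathbb{K}[x_{i|A}:i\notin A]$.
   Context: $\phi:\mathbb{K}[x_{i|A}: i\in[n],A\subseteq[n]\setminus\{i\}]\to\mathbb{K}[y_i,\beta_j]$, $x_{i|A}\mapsto y_i\prod_{j\in A}\beta_j$; $\phi'$ is its extension to all $x_{i|A}$, $A\subseteq[n]$; $I_\phi=\ker\phi$, $I_{\phi'}=\ker\phi'$. $L$ is the lattice on the variables $x_{i|A}$ with $x_{i|A}\le x_{j|B}$ iff $i\le j$ and $A\subseteq B$. $G_L=\{x_{i|A}x_{j|B}-x_{\min(i,j)|A\cap B}x_{\max(i,j)|A\cup B}: x_{i|A},x_{j|B}\text{ incomparable}\}$. $T=T_1\cup T_2$, where $T_1$ is the set of elements of $G_L$ all of whose variables lie in $\mathbb{K}[x_{i|A}:i\notin A]$, and $T_2=\{x_{i|A}x_{j|B}-x_{i|(A\cap B)\cup\{j\}}x_{j|(A\setminus\{j\})\cup B}: i<j,\ i\notin A,\ j\notin B,\ j\in A,\ x_{i|A},x_{j|B}\text{ incomparable in }L\}$. Variables are totally ordered by $x_{i|A}\prec x_{j|B}$ iff $i<j$, or $i=j$ and $|A|<|B|$, or $i=j$, $|A|=|B|$ and $\min(A\setminus B)<\min(B\setminus A)$; indexing them increasingly, $x^u<x^v$ iff $\deg x^u<\deg x^v$, or degrees are equal and the rightmost nonzero entry of $v-u$ is negative. *)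

theory Defs
  imports "HOL-Library.Poly_Mapping"
begin

type_synonym ('v, 'k) mpoly = "('v \<Rightarrow>\<^sub>0 nat) \<Rightarrow>\<^sub>0 'k"

definition Var :: "'v \<Rightarrow> ('v, 'k::comm_ring_1) mpoly" where
  "Var v = Poly_Mapping.single (Poly_Mapping.single v 1) 1"

definition const :: "'k::comm_ring_1 \<Rightarrow> ('v, 'k) mpoly" where
  "const c = Poly_Mapping.single 0 c"

definition in_vars :: "'v set \<Rightarrow> (('v \<Rightarrow>\<^sub>0 nat) \<Rightarrow>\<^sub>0 'k::zero) \<Rightarrow> bool" where
  "in_vars V p \<longleftrightarrow> (\<forall>m\<in>Poly_Mapping.keys p. Poly_Mapping.keys m \<subseteq> V)"

definition subst :: "('v \<Rightarrow> ('w, 'k::comm_ring_1) mpoly) \<Rightarrow> ('v, 'k) mpoly \<Rightarrow> ('w, 'k) mpoly" where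
  "subst img p = (\<Sum>m\<in>Poly_Mapping.keys p. const (Poly_Mapping.lookup p m) * (\<Prod>v\<in>Poly_Mapping.keys m. (img v) ^ (Poly_Mapping.lookup m v)))"

text \<open>Variables x_{i|A} are pairs (i, A) with i in [n] = {1..n}, A a subset of [n].
 Target variables: Inl i stands for y_i, Inr j stands for beta_j.\<close>

type_synonym var = "nat \<times> nat set"

definition allvars :: "nat \<Rightarrow> var set" where
  "allvars n = {(i, A). i \<in> {1..n} \<and> A \<subseteq> {1..n}}"

definition vars :: "nat \<Rightarrow> var set" where
  "vars n = {(i, A). i \<in> {1..n} \<and> A \<subseteq> {1..n} \<and> i \<notin> A}"

definition phi_img :: "var \<Rightarrow> (nat + nat, 'k::comm_ring_1) mpoly" where
  "phi_img v = Var (Inl (fst v)) * (\<Prod>j\<in>snd v. Var (Inr j))"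

definition I_phi :: "nat \<Rightarrow> (var, 'k::comm_ring_1) mpoly set" where
  "I_phi n = {p. in_vars (vars n) p \<and> subst phi_img p = 0}"

definition I_phi' :: "nat \<Rightarrow> (var, 'k::comm_ring_1) mpoly set" where
  "I_phi' n = {p. in_vars (allvars n) p \<and> subst phi_img p = 0}"

definition leqL :: "var \<Rightarrow> var \<Rightarrow> bool" where
  "leqL a b \<longleftrightarrow> fst a \<le> fst b \<and> snd a \<subseteq> snd b"

definition incomparable :: "var \<Rightarrow> var \<Rightarrow> bool" where
  "incomparable a b \<longleftrightarrow> \<not> leqL a b \<and> \<not> leqL b a"

definition G_L :: "nat \<Rightarrow> (var, 'k::comm_ring_1) mpoly set" where
  "G_L n = {Var (i, A) * Var (j, B) - Var (min i j, A \<inter> B) * Var (max i j, A \<union> B) | i A j B.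
              (i, A) \<in> allvars n \<and> (j, B) \<in> allvars n \<and> incomparable (i, A) (j, B)}"

definition T1 :: "nat \<Rightarrow> (var, 'k::comm_ring_1) mpoly set" where
  "T1 n = {g \<in> G_L n. in_vars (vars n) g}"

definition T2 :: "nat \<Rightarrow> (var, 'k::comm_ring_1) mpoly set" where
  "T2 n = {Var (i, A) * Var (j, B) - Var (i, (A \<inter> B) \<union> {j}) * Var (j, (A - {j}) \<union> B) | i A j B.
              (i, A) \<in> allvars n \<and> (j, B) \<in> allvars n \<and> i < j \<and> i \<notin> A \<and> j \<notin> B \<and> j \<in> A
              \<and> incomparable (i, A) (j, B)}"

definition T :: "nat \<Rightarrow> (var, 'k::comm_ring_1) mpoly set" where
  "T n = T1 n \<union> T2 n"

definition var_less :: "var \<Rightarrow> var \<Rightarrow> bool" where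
  "var_less a b \<longleftrightarrow> fst a < fst b
     \<or> (fst a = fst b \<and> card (snd a) < card (snd b))
     \<or> (fst a = fst b \<and> card (snd a) = card (snd b) \<and> Min (snd a - snd b) < Min (snd b - snd a))"

definition mdeg :: "('v \<Rightarrow>\<^sub>0 nat) \<Rightarrow> nat" where
  "mdeg u = (\<Sum>v\<in>Poly_Mapping.keys u. Poly_Mapping.lookup u v)"

text \<open>Graded reverse lexicographic order: x^u < x^v iff deg u < deg v, or the degrees
 agree and the entry of v - u at the var_less-largest variable where u and v differ
 (the rightmost nonzero entry of v - u) is negative.\<close>
definition mono_less :: "(var \<Rightarrow>\<^sub>0 nat) \<Rightarrow> (var \<Rightarrow>\<^sub>0 nat) \<Rightarrow> bool" where
  "mono_less u v \<longleftrightarrow> mdeg u < mdeg v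
     \<or> (mdeg u = mdeg v \<and>
        (\<exists>w. Poly_Mapping.lookup v w < Poly_Mapping.lookup u w \<and>
             (\<forall>w'. var_less w w' \<longrightarrow> Poly_Mapping.lookup u w' = Poly_Mapping.lookup v w')))"

definition lm :: "(var, 'k::zero) mpoly \<Rightarrow> (var \<Rightarrow>\<^sub>0 nat)" where
  "lm p = (THE m. m \<in> Poly_Mapping.keys p \<and> (\<forall>m'\<in>Poly_Mapping.keys p. m' \<noteq> m \<longrightarrow> mono_less m' m))"

definition lc :: "(var, 'k::zero) mpoly \<Rightarrow> 'k" where
  "lc p = Poly_Mapping.lookup p (lm p)"

definition mdvd :: "('v \<Rightarrow>\<^sub>0 nat) \<Rightarrow> ('v \<Rightarrow>\<^sub>0 nat) \<Rightarrow> bool" where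
  "mdvd u v \<longleftrightarrow> (\<forall>w. Poly_Mapping.lookup u w \<le> Poly_Mapping.lookup v w)"

definition is_reduced_GB :: "(var, 'k::field) mpoly set \<Rightarrow> (var, 'k) mpoly set \<Rightarrow> bool" where
  "is_reduced_GB I G \<longleftrightarrow>
     finite G \<and> G \<subseteq> I
     \<and> (\<forall>f\<in>I. f \<noteq> 0 \<longrightarrow> (\<exists>g\<in>G. mdvd (lm g) (lm f)))
     \<and> (\<forall>g\<in>G. g \<noteq> 0 \<and> lc g = 1)
     \<and> (\<forall>g\<in>G. \<forall>h\<in>G. g \<noteq> h \<longrightarrow> (\<forall>m\<in>Poly_Mapping.keys g. \<not> mdvd (lm h) m))"

end

theory Submission
  imports Defs
begin

text \<open>Call \<open>p\<close> and \<open>q\<close> crossing when \<open>x\<^sub>p x\<^sub>q\<close> is the leading monomial of an element of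
  \<open>T\<close>, and call a monomial standard when it contains no crossing pair. A crossing pair can be
  straightened into a grevlex-smaller pair with the same image under \<open>\<phi>\<close>. Conversely a standard
  monomial is determined by its image: its largest variable is \<open>x\<^sub>i\<^sub>|\<^sub>K\<close>, where \<open>i\<close> is the largest
  index with a \<open>y\<^sub>i\<close> factor and \<open>K\<close> the set of all other \<open>k\<close> with a \<open>\<beta>\<^sub>k\<close> factor. So the least
  monomial with a given image is the unique standard one, and the leading monomial of a nonzero
  element of \<open>ker \<phi>\<close> is not standard, i.e. divisible by a leading monomial of \<open>T\<close>. Reducedness
  holds because the trailing monomials of \<open>T\<close> are standard and distinct elements of \<open>T\<close> have
  distinct leading monomials.\<close>

abbreviation lookup :: "('a \<Rightarrow>\<^sub>0 'b::zero) \<Rightarrow> 'a \<Rightarrow> 'b" where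
  "lookup \<equiv> Poly_Mapping.lookup"

abbreviation keys :: "('a \<Rightarrow>\<^sub>0 'b::zero) \<Rightarrow> 'a set" where
  "keys \<equiv> Poly_Mapping.keys"

section \<open>The orders on variables and monomials\<close>

text \<open>For finite sets of equal size, the third clause of \<open>var_less\<close> says that the least
  element of the symmetric difference lies in the first set; stated this way it is transitive
  without side conditions.\<close>
definition least_diff_in :: "nat set \<Rightarrow> nat set \<Rightarrow> bool" where
  "least_diff_in A B \<longleftrightarrow> (\<exists>z. z \<in> A \<and> z \<notin> B \<and> (\<forall>y<z. y \<in> A \<longleftrightarrow> y \<in> B))"

lemma card_eq_diff_nonempty:
  assumes "finite A" "finite B" "card A = card B" "A \<noteq> B"
  shows "A - B \<noteq> {}"
  using assms card_subset_eq by (metis Diff_eq_empty_iff)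

lemma Min_diff_less_iff_least_diff_in:
  assumes fin: "finite A" "finite B" and card: "card A = card B"
  shows "Min (A - B) < Min (B - A) \<longleftrightarrow> least_diff_in A B"
proof
  assume less: "Min (A - B) < Min (B - A)"
  then have "A \<noteq> B" by auto
  then have "A - B \<noteq> {}" "B - A \<noteq> {}"
    using card_eq_diff_nonempty fin card by metis+
  then have z: "Min (A - B) \<in> A - B" and "Min (B - A) \<in> B - A"
    using fin by (meson Min_in finite_Diff)+
  moreover have "y \<in> A \<longleftrightarrow> y \<in> B" if "y < Min (A - B)" for y
    using that less fin Min_le[of "A - B" y] Min_le[of "B - A" y]
    by (metis DiffI finite_Diff leD order.strict_trans)
  ultimately show "least_diff_in A B"
    unfolding least_diff_in_def by blast
next
  assume "least_diff_in A B"
  then obtain z where z: "z \<in> A" "z \<notin> B" "\<forall>y<z. y \<in> A \<longleftrightarrow> y \<in> B"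
    unfolding least_diff_in_def by blast
  then have "B - A \<noteq> {}"
    using card_eq_diff_nonempty[of B A] fin card by auto
  then have "Min (B - A) \<in> B - A"
    using fin by (meson Min_in finite_Diff)
  then have "z < Min (B - A)"
    using z by (metis DiffD1 DiffD2 linorder_neqE_nat)
  moreover have "Min (A - B) \<le> z"
    using z fin by (simp add: Min_le)
  ultimately show "Min (A - B) < Min (B - A)" by linarith
qed

lemma least_diff_in_trans:
  assumes "least_diff_in A B" "least_diff_in B C"
  shows "least_diff_in A C"
proof -
  obtain z1 where a: "z1 \<in> A" "z1 \<notin> B" "\<forall>y<z1. y \<in> A \<longleftrightarrow> y \<in> B"
    using assms(1) unfolding least_diff_in_def by blast
  obtain z2 where b: "z2 \<in> B" "z2 \<notin> C" "\<forall>y<z2. y \<in> B \<longleftrightarrow> y \<in> C"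
    using assms(2) unfolding least_diff_in_def by blast
  have "z1 \<noteq> z2" using a b by blast
  then consider "z1 < z2" | "z2 < z1" by linarith
  then show ?thesis
    unfolding least_diff_in_def using a b by cases (metis order.strict_trans)+
qed

definition fin_vars :: "var set" where
  "fin_vars = {v. finite (snd v)}"

lemma vars_subset_fin_vars: "vars n \<subseteq> fin_vars"
  unfolding vars_def fin_vars_def using finite_subset[of _ "{1..n}"] by auto

lemma var_less_iff_least_diff_in:
  assumes "a \<in> fin_vars" "b \<in> fin_vars"
  shows "var_less a b \<longleftrightarrow> fst a < fst b \<or> (fst a = fst b \<and> card (snd a) < card (snd b))
     \<or> (fst a = fst b \<and> card (snd a) = card (snd b) \<and> least_diff_in (snd a) (snd b))"
  using Min_diff_less_iff_least_diff_in[of "snd a" "snd b"] assms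
  unfolding var_less_def fin_vars_def by auto

lemma var_less_irrefl: "\<not> var_less a a"
  unfolding var_less_def by auto

lemma var_less_trans:
  assumes "a \<in> fin_vars" "b \<in> fin_vars" "c \<in> fin_vars" "var_less a b" "var_less b c"
  shows "var_less a c"
  using assms(4,5) least_diff_in_trans
  unfolding var_less_iff_least_diff_in[OF assms(1,2)] var_less_iff_least_diff_in[OF assms(2,3)]
    var_less_iff_least_diff_in[OF assms(1,3)]
  by (smt (verit) order.strict_trans)

lemma var_less_total:
  assumes "a \<in> fin_vars" "b \<in> fin_vars" "a \<noteq> b"
  shows "var_less a b \<or> var_less b a"
proof (cases "fst a = fst b \<and> card (snd a) = card (snd b)")
  case True
  then have "snd a \<noteq> snd b" using assms(3) by (metis prod_eqI)
  then have "Min (snd a - snd b) \<in> snd a - snd b" "Min (snd b - snd a) \<in> snd b - snd a"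
    using card_eq_diff_nonempty assms True unfolding fin_vars_def
    by (metis Min_in finite_Diff mem_Collect_eq)+
  then have "Min (snd a - snd b) \<noteq> Min (snd b - snd a)" by auto
  then show ?thesis using True unfolding var_less_def by auto
qed (auto simp: var_less_def)

lemma var_less_asym: "a \<in> fin_vars \<Longrightarrow> b \<in> fin_vars \<Longrightarrow> var_less a b \<Longrightarrow> \<not> var_less b a"
  using var_less_trans[of a b a] var_less_irrefl[of a] by blast

lemma transp_on_var_less: "transp_on fin_vars var_less"
  by (rule transp_onI) (rule var_less_trans)

lemma totalp_on_var_less: "totalp_on fin_vars var_less"
  by (rule totalp_onI) (rule var_less_total)

definition fin_monos :: "(var \<Rightarrow>\<^sub>0 nat) set" where
  "fin_monos = {u. keys u \<subseteq> fin_vars}"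

lemma lookup_eq_0_outside_fin_vars: "u \<in> fin_monos \<Longrightarrow> v \<notin> fin_vars \<Longrightarrow> lookup u v = 0"
  unfolding fin_monos_def by (meson in_keys_iff subsetD mem_Collect_eq)

lemma mdeg_eq_sum: "finite S \<Longrightarrow> keys u \<subseteq> S \<Longrightarrow> mdeg u = (\<Sum>v\<in>S. lookup u v)"
  unfolding mdeg_def by (rule sum.mono_neutral_left) (auto simp: in_keys_iff)

lemma mdeg_add: "mdeg (u + w) = mdeg u + mdeg w"
proof -
  let ?S = "keys u \<union> keys w"
  have "mdeg (u + w) = (\<Sum>v\<in>?S. lookup (u + w) v)"
    by (rule mdeg_eq_sum) (use keys_add[of u w] in auto)
  also have "\<dots> = (\<Sum>v\<in>?S. lookup u v) + (\<Sum>v\<in>?S. lookup w v)"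
    by (simp add: lookup_add sum.distrib)
  also have "\<dots> = mdeg u + mdeg w"
    by (subst (1 2) mdeg_eq_sum[of ?S]) auto
  finally show ?thesis .
qed

lemma mdeg_single: "mdeg (Poly_Mapping.single v k) = k"
  unfolding mdeg_def by simp

lemma mdeg_eq_0_iff: "mdeg (m :: 'a \<Rightarrow>\<^sub>0 nat) = 0 \<longleftrightarrow> m = 0"
proof
  assume "mdeg m = 0"
  then have "\<forall>v\<in>keys m. lookup m v = 0" unfolding mdeg_def by simp
  then have "keys m = {}" by (meson equals0I in_keys_iff)
  then show "m = 0" by simp
qed (simp add: mdeg_def)

lemma lookup_le_mdeg: "lookup u v \<le> mdeg u"
  unfolding mdeg_def by (cases "v \<in> keys u") (simp_all add: member_le_sum in_keys_iff)

lemma mono_less_mdeg: "mono_less u v \<Longrightarrow> mdeg u \<le> mdeg v"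
  unfolding mono_less_def by linarith

lemma mono_less_irrefl: "\<not> mono_less u u"
  unfolding mono_less_def by auto

lemma mono_less_add_left: "mono_less u v \<Longrightarrow> mono_less (r + u) (r + v)"
  unfolding mono_less_def by (auto simp: mdeg_add lookup_add)

lemma agree_above_var_less:
  assumes agree: "\<forall>w. var_less x w \<longrightarrow> lookup u w = lookup v w"
    and xy: "var_less x y" and "x \<in> fin_vars" "y \<in> fin_vars" "u \<in> fin_monos" "v \<in> fin_monos"
  shows "\<forall>w. var_less y w \<longrightarrow> lookup u w = lookup v w"
  using assms var_less_trans lookup_eq_0_outside_fin_vars by metis

lemma mono_less_trans:
  assumes fin: "u \<in> fin_monos" "v \<in> fin_monos" "w \<in> fin_monos"
    and uv: "mono_less u v" and vw: "mono_less v w"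
  shows "mono_less u w"
proof (cases "mdeg u = mdeg v \<and> mdeg v = mdeg w")
  case False
  then show ?thesis using uv vw unfolding mono_less_def by auto
next
  case True
  then have deg: "mdeg u = mdeg w" by simp
  obtain x where x: "lookup v x < lookup u x" "\<forall>z. var_less x z \<longrightarrow> lookup u z = lookup v z"
    using uv True unfolding mono_less_def by auto
  obtain y where y: "lookup w y < lookup v y" "\<forall>z. var_less y z \<longrightarrow> lookup v z = lookup w z"
    using vw True unfolding mono_less_def by auto
  have "x \<in> fin_vars" "y \<in> fin_vars"
    using x(1) y(1) fin lookup_eq_0_outside_fin_vars by (metis not_less0)+
  then consider "x = y" | "var_less x y" | "var_less y x"
    using var_less_total by blast
  then show ?thesis
  proof cases
    case 1
    then show ?thesis using True x y unfolding mono_less_def by (metis order.strict_trans)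
  next
    case 2
    have "lookup w y < lookup u y"
      using x(2)[rule_format, OF 2] y(1) by simp
    moreover have "\<forall>z. var_less y z \<longrightarrow> lookup u z = lookup w z"
      using y(2) agree_above_var_less[OF x(2) 2] \<open>x \<in> fin_vars\<close> \<open>y \<in> fin_vars\<close> fin by auto
    ultimately show ?thesis using deg unfolding mono_less_def by blast
  next
    case 3
    have "lookup w x < lookup u x"
      using y(2)[rule_format, OF 3] x(1) by simp
    moreover have "\<forall>z. var_less x z \<longrightarrow> lookup u z = lookup w z"
      using x(2) agree_above_var_less[OF y(2) 3] \<open>x \<in> fin_vars\<close> \<open>y \<in> fin_vars\<close> fin by auto
    ultimately show ?thesis using deg unfolding mono_less_def by blast
  qed
qed

lemma mono_less_asym: "u \<in> fin_monos \<Longrightarrow> v \<in> fin_monos \<Longrightarrow> mono_less u v \<Longrightarrow> \<not> mono_less v u"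
  using mono_less_trans[of u v u] mono_less_irrefl[of u] by blast

lemma mono_less_total:
  assumes fin: "u \<in> fin_monos" "v \<in> fin_monos" and "u \<noteq> v"
  shows "mono_less u v \<or> mono_less v u"
proof (cases "mdeg u = mdeg v")
  case False
  then show ?thesis unfolding mono_less_def by linarith
next
  case True
  define D where "D = {x. lookup u x \<noteq> lookup v x}"
  have "D \<subseteq> keys u \<union> keys v"
    unfolding D_def by (auto simp: in_keys_iff)
  then have "finite D"
    by (rule finite_subset) simp
  moreover have "D \<noteq> {}"
  proof
    assume "D = {}"
    then have "u = v" unfolding D_def by (intro poly_mapping_eqI) auto
    with \<open>u \<noteq> v\<close> show False ..
  qed
  moreover have D_fin: "D \<subseteq> fin_vars"
  proof
    fix x assume "x \<in> D"
    show "x \<in> fin_vars"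
    proof (rule ccontr)
      assume "x \<notin> fin_vars"
      then have "lookup u x = 0" "lookup v x = 0"
        using fin lookup_eq_0_outside_fin_vars by blast+
      with \<open>x \<in> D\<close> show False unfolding D_def by simp
    qed
  qed
  ultimately obtain x where x: "x \<in> D" "\<forall>y\<in>D. y \<noteq> x \<longrightarrow> var_less y x"
    using Finite_Set.bex_greatest_element[of D var_less]
      transp_on_subset[OF transp_on_var_less D_fin] totalp_on_subset[OF totalp_on_var_less D_fin]
    by blast
  have above: "lookup u z = lookup v z" if "var_less x z" for z
  proof (rule ccontr)
    assume "lookup u z \<noteq> lookup v z"
    then have "z \<in> D" unfolding D_def by simp
    then show False
      using x var_less_asym[of x z] var_less_irrefl[of x] that D_fin by (metis subsetD)
  qed
  have "lookup v x < lookup u x \<or> lookup u x < lookup v x"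
    using x(1) unfolding D_def by auto
  then show ?thesis
  proof
    assume "lookup v x < lookup u x"
    then have "mono_less u v" unfolding mono_less_def using True above by blast
    then show ?thesis ..
  next
    assume "lookup u x < lookup v x"
    then have "mono_less v u" unfolding mono_less_def using True[symmetric] above[symmetric] by blast
    then show ?thesis ..
  qed
qed

lemma transp_on_mono_less: "transp_on fin_monos mono_less"
  using mono_less_trans by (intro transp_onI) blast

lemma totalp_on_mono_less: "totalp_on fin_monos mono_less"
  using mono_less_total unfolding totalp_on_def by blast

lemma lm_eqI:
  assumes "keys f \<subseteq> fin_monos" "m \<in> keys f" "\<forall>m'\<in>keys f. m' \<noteq> m \<longrightarrow> mono_less m' m"
  shows "lm f = m"
  unfolding lm_def
proof (rule the_equality)
  show "m \<in> keys f \<and> (\<forall>m'\<in>keys f. m' \<noteq> m \<longrightarrow> mono_less m' m)"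
    using assms by blast
next
  fix m' assume m': "m' \<in> keys f \<and> (\<forall>m''\<in>keys f. m'' \<noteq> m' \<longrightarrow> mono_less m'' m')"
  show "m' = m"
  proof (rule ccontr)
    assume "m' \<noteq> m"
    then have "mono_less m m'" "mono_less m' m" using assms(2,3) m' by auto
    moreover have "m \<in> fin_monos" "m' \<in> fin_monos" using assms m' by blast+
    ultimately show False using mono_less_asym[of m m'] by blast
  qed
qed

lemma lm_greatest:
  assumes "f \<noteq> 0" "keys f \<subseteq> fin_monos"
  shows "lm f \<in> keys f" "\<forall>m'\<in>keys f. m' \<noteq> lm f \<longrightarrow> mono_less m' (lm f)"
proof -
  have "keys f \<noteq> {}" using assms(1) by simp
  then obtain m where "m \<in> keys f" "\<forall>m'\<in>keys f. m' \<noteq> m \<longrightarrow> mono_less m' m"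
    using Finite_Set.bex_greatest_element[OF finite_keys _
        transp_on_subset[OF transp_on_mono_less assms(2)]
        totalp_on_subset[OF totalp_on_mono_less assms(2)]]
    by blast
  moreover from this have "lm f = m" using lm_eqI[OF assms(2)] by blast
  ultimately show "lm f \<in> keys f" "\<forall>m'\<in>keys f. m' \<noteq> lm f \<longrightarrow> mono_less m' (lm f)"
    by simp_all
qed

section \<open>Crossing pairs and straightening\<close>

text \<open>For variables \<open>p, q\<close> of \<open>vars n\<close>, the monomial \<open>x\<^sub>p x\<^sub>q\<close> is the leading monomial of an
  element of \<open>T\<close> exactly when \<open>p\<close> and \<open>q\<close> cross.\<close>
definition crossing :: "var \<Rightarrow> var \<Rightarrow> bool" where
  "crossing p q \<longleftrightarrow> (fst p < fst q \<and> \<not> snd p - {fst q} \<subseteq> snd q)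
     \<or> (fst p = fst q \<and> \<not> (snd p \<subseteq> snd q \<or> snd q \<subseteq> snd p))
     \<or> (fst q < fst p \<and> \<not> snd q - {fst p} \<subseteq> snd p)"

text \<open>For \<open>fst p \<le> fst q\<close> this is meet and join in \<open>L\<close>, except that the index \<open>fst q\<close>
  stays in the first set, so that both results remain variables \<open>x\<^sub>i\<^sub>|\<^sub>A\<close> with \<open>i \<notin> A\<close>;
  this exception produces the binomials \<open>T\<^sub>2\<close>.\<close>
definition straighten_sorted :: "var \<Rightarrow> var \<Rightarrow> var \<times> var" where
  "straighten_sorted p q =
     ((fst p, snd p \<inter> snd q \<union> ({fst q} \<inter> snd p)), (fst q, (snd p - {fst q}) \<union> snd q))"

definition straighten :: "var \<Rightarrow> var \<Rightarrow> var \<times> var" where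
  "straighten p q = (if fst q < fst p then straighten_sorted q p else straighten_sorted p q)"

definition mono2 :: "var \<Rightarrow> var \<Rightarrow> (var \<Rightarrow>\<^sub>0 nat)" where
  "mono2 p q = Poly_Mapping.single p 1 + Poly_Mapping.single q 1"

text \<open>The exponents of \<open>y\<^sub>i\<close> and \<open>\<beta>\<^sub>k\<close> in \<open>\<phi>(x\<^sup>u)\<close>.\<close>
definition ydeg :: "nat \<Rightarrow> (var \<Rightarrow>\<^sub>0 nat) \<Rightarrow> nat \<Rightarrow> nat" where
  "ydeg n u i = (\<Sum>v\<in>{v\<in>vars n. fst v = i}. lookup u v)"

definition betadeg :: "nat \<Rightarrow> (var \<Rightarrow>\<^sub>0 nat) \<Rightarrow> nat \<Rightarrow> nat" where
  "betadeg n u k = (\<Sum>v\<in>{v\<in>vars n. k \<in> snd v}. lookup u v)"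

definition standard :: "(var \<Rightarrow>\<^sub>0 nat) \<Rightarrow> bool" where
  "standard u \<longleftrightarrow> (\<forall>p q. 0 < lookup u p \<longrightarrow> 0 < lookup u q \<longrightarrow> \<not> crossing p q)"

lemma crossing_sym: "crossing p q \<longleftrightarrow> crossing q p"
  unfolding crossing_def by auto

lemma crossing_irrefl: "\<not> crossing p p"
  unfolding crossing_def by auto

lemma finite_vars: "finite (vars n)"
  unfolding vars_def by (rule finite_subset[of _ "{1..n} \<times> Pow {1..n}"]) auto

lemma finite_vars_filter: "finite {v\<in>vars n. P v}"
  using finite_vars by simp

lemma lookup_mono2: "lookup (mono2 p q) x = (if p = x then 1 else 0) + (if q = x then 1 else 0)"
  unfolding mono2_def by (simp add: lookup_add lookup_single when_def)

lemma keys_mono2: "keys (mono2 p q) = {p, q}"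
proof (rule set_eqI)
  fix x show "x \<in> keys (mono2 p q) \<longleftrightarrow> x \<in> {p, q}"
    unfolding in_keys_iff lookup_mono2 by auto
qed

lemma mdeg_mono2: "mdeg (mono2 p q) = 2"
  unfolding mono2_def mdeg_add mdeg_single by simp

lemma mono2_commute: "mono2 p q = mono2 q p"
  unfolding mono2_def by (simp add: add.commute)

lemma ydeg_add: "ydeg n (u + w) i = ydeg n u i + ydeg n w i"
  unfolding ydeg_def by (simp add: lookup_add sum.distrib)

lemma betadeg_add: "betadeg n (u + w) k = betadeg n u k + betadeg n w k"
  unfolding betadeg_def by (simp add: lookup_add sum.distrib)

lemma ydeg_mono2:
  "p \<in> vars n \<Longrightarrow> q \<in> vars n \<Longrightarrow>
    ydeg n (mono2 p q) i = (if fst p = i then 1 else 0) + (if fst q = i then 1 else 0)"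
  unfolding ydeg_def lookup_mono2 by (simp add: sum.distrib sum.delta finite_vars_filter)

lemma betadeg_mono2:
  "p \<in> vars n \<Longrightarrow> q \<in> vars n \<Longrightarrow>
    betadeg n (mono2 p q) k = (if k \<in> snd p then 1 else 0) + (if k \<in> snd q then 1 else 0)"
  unfolding betadeg_def lookup_mono2 by (simp add: sum.distrib sum.delta finite_vars_filter)

lemma not_var_less_fst: "k < j \<Longrightarrow> \<not> var_less (j, X) (k, Y)"
  unfolding var_less_def by auto

lemma not_var_less_psubset:
  assumes "finite X" "Y \<subset> X"
  shows "\<not> var_less (j, X) (j, Y)"
proof -
  have "card Y < card X" by (rule psubset_card_mono[OF assms])
  then show ?thesis unfolding var_less_def by simp
qed

lemma straighten_sorted_in_vars:
  assumes "(i, A) \<in> vars n" "(j, B) \<in> vars n" "straighten_sorted (i, A) (j, B) = (c, d)"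
  shows "c \<in> vars n" "d \<in> vars n"
  using assms unfolding straighten_sorted_def vars_def by auto

lemma straighten_sorted_ydeg:
  assumes "(i, A) \<in> vars n" "(j, B) \<in> vars n" "straighten_sorted (i, A) (j, B) = (c, d)"
  shows "ydeg n (mono2 c d) = ydeg n (mono2 (i, A) (j, B))"
  using assms straighten_sorted_in_vars[OF assms]
  by (auto simp: ydeg_mono2 straighten_sorted_def)

lemma straighten_sorted_betadeg:
  assumes "(i, A) \<in> vars n" "(j, B) \<in> vars n" "straighten_sorted (i, A) (j, B) = (c, d)"
  shows "betadeg n (mono2 c d) = betadeg n (mono2 (i, A) (j, B))"
proof
  fix k
  have "j \<notin> B" using assms(2) unfolding vars_def by simp
  then show "betadeg n (mono2 c d) k = betadeg n (mono2 (i, A) (j, B)) k"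
    using assms straighten_sorted_in_vars[OF assms]
    by (cases "k = j") (auto simp: betadeg_mono2 straighten_sorted_def)
qed

lemma straighten_sorted_not_crossing:
  assumes "i \<le> j" "i \<notin> A" "straighten_sorted (i, A) (j, B) = (c, d)"
  shows "\<not> crossing c d"
  using assms unfolding straighten_sorted_def crossing_def by (cases "i = j") auto

lemma straighten_sorted_mono_less:
  assumes p: "(i, A) \<in> vars n" and q: "(j, B) \<in> vars n" and "i \<le> j"
    and cross: "crossing (i, A) (j, B)" and cd: "straighten_sorted (i, A) (j, B) = (c, d)"
  shows "mono_less (mono2 c d) (mono2 (i, A) (j, B))"
proof -
  have c: "c = (i, A \<inter> B \<union> ({j} \<inter> A))" and d: "d = (j, (A - {j}) \<union> B)"
    using cd unfolding straighten_sorted_def by auto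
  have "i \<notin> A" "j \<notin> B" using p q unfolding vars_def by auto
  have "finite A" "finite B"
    using p q vars_subset_fin_vars unfolding fin_vars_def by fastforce+
  then have "finite ((A - {j}) \<union> B)" by simp
  have "\<not> A - {j} \<subseteq> B" and eq_B: "i = j \<Longrightarrow> \<not> B \<subseteq> A"
    using cross \<open>i \<le> j\<close> \<open>i \<notin> A\<close> unfolding crossing_def by (cases "i = j"; auto)+
  text \<open>\<open>d\<close> is the \<open>var_less\<close>-largest of the four variables and differs from \<open>(i, A)\<close> and
    \<open>(j, B)\<close>, so the grevlex comparison is decided at \<open>d\<close>.\<close>
  have below_d: "\<not> var_less d x" if "x \<in> {(i, A), (j, B), c, d}" for x
  proof (cases "i = j")
    case True
    then have "A \<subset> (A - {j}) \<union> B" "B \<subset> (A - {j}) \<union> B" "A \<inter> B \<union> ({j} \<inter> A) \<subset> (A - {j}) \<union> B"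
      using \<open>\<not> A - {j} \<subseteq> B\<close> eq_B \<open>i \<notin> A\<close> by blast+
    then show ?thesis
      using that True not_var_less_psubset[OF \<open>finite ((A - {j}) \<union> B)\<close>] var_less_irrefl
      unfolding c d by auto
  next
    case False
    have "B \<subset> (A - {j}) \<union> B" using \<open>\<not> A - {j} \<subseteq> B\<close> by blast
    then have "\<not> var_less d (j, B)"
      unfolding d by (rule not_var_less_psubset[OF \<open>finite ((A - {j}) \<union> B)\<close>])
    moreover have "\<not> var_less d (i, A)" "\<not> var_less d c"
      using False \<open>i \<le> j\<close> not_var_less_fst unfolding c d by auto
    ultimately show ?thesis
      using that var_less_irrefl[of d] by auto
  qed
  have "d \<noteq> (i, A)" "d \<noteq> (j, B)"
    using \<open>\<not> A - {j} \<subseteq> B\<close> eq_B unfolding d by auto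
  then have "lookup (mono2 (i, A) (j, B)) d < lookup (mono2 c d) d"
    unfolding lookup_mono2 by simp
  moreover have "lookup (mono2 c d) x = lookup (mono2 (i, A) (j, B)) x" if "var_less d x" for x
    using below_d[of x] that unfolding lookup_mono2 by auto
  ultimately show ?thesis
    unfolding mono_less_def mdeg_mono2 by blast
qed

lemma straighten_commute:
  assumes "p \<in> vars n" "q \<in> vars n"
  shows "straighten q p = straighten p q"
proof -
  have "fst p \<notin> snd p" "fst q \<notin> snd q" using assms unfolding vars_def by auto
  then show ?thesis
    unfolding straighten_def straighten_sorted_def
    by (cases "fst p < fst q"; cases "fst q < fst p") (auto simp: Int_commute prod_eq_iff)
qed

lemma straighten_crossing:
  assumes p: "p \<in> vars n" and q: "q \<in> vars n" and cross: "crossing p q"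
    and cd: "straighten p q = (c, d)"
  shows "c \<in> vars n" "d \<in> vars n" "\<not> crossing c d"
    "ydeg n (mono2 c d) = ydeg n (mono2 p q)"
    "betadeg n (mono2 c d) = betadeg n (mono2 p q)"
    "mono_less (mono2 c d) (mono2 p q)"
proof -
  have sorted: "c \<in> vars n \<and> d \<in> vars n \<and> \<not> crossing c d
      \<and> ydeg n (mono2 c d) = ydeg n (mono2 p q) \<and> betadeg n (mono2 c d) = betadeg n (mono2 p q)
      \<and> mono_less (mono2 c d) (mono2 p q)"
    if "p \<in> vars n" "q \<in> vars n" "crossing p q" "fst p \<le> fst q"
      "straighten_sorted p q = (c, d)" for p q
  proof -
    obtain i A j B where pq: "p = (i, A)" "q = (j, B)" by fastforce
    have "i \<notin> A" using that(1) pq unfolding vars_def by simp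
    then show ?thesis
      using that straighten_sorted_in_vars straighten_sorted_not_crossing straighten_sorted_ydeg
        straighten_sorted_betadeg straighten_sorted_mono_less
      unfolding pq by (metis fst_conv)
  qed
  have "c \<in> vars n \<and> d \<in> vars n \<and> \<not> crossing c d
      \<and> ydeg n (mono2 c d) = ydeg n (mono2 p q) \<and> betadeg n (mono2 c d) = betadeg n (mono2 p q)
      \<and> mono_less (mono2 c d) (mono2 p q)"
  proof (cases "fst q < fst p")
    case True
    then show ?thesis
      using sorted[OF q p _ _] cross cd crossing_sym mono2_commute
      unfolding straighten_def by (metis less_imp_le)
  next
    case False
    then show ?thesis
      using sorted[OF p q cross] cd unfolding straighten_def by simp
  qed
  then show "c \<in> vars n" "d \<in> vars n" "\<not> crossing c d"
    "ydeg n (mono2 c d) = ydeg n (mono2 p q)"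
    "betadeg n (mono2 c d) = betadeg n (mono2 p q)"
    "mono_less (mono2 c d) (mono2 p q)"
    by simp_all
qed

section \<open>Standard monomials are determined by their image\<close>

lemma lookup_le_ydeg: "v \<in> vars n \<Longrightarrow> lookup m v \<le> ydeg n m (fst v)"
  unfolding ydeg_def by (rule member_le_sum) (simp_all add: finite_vars_filter)

lemma lookup_le_betadeg: "v \<in> vars n \<Longrightarrow> k \<in> snd v \<Longrightarrow> lookup m v \<le> betadeg n m k"
  unfolding betadeg_def by (rule member_le_sum) (simp_all add: finite_vars_filter)

lemma ydeg_posE:
  assumes "0 < ydeg n m i"
  obtains v where "v \<in> vars n" "fst v = i" "0 < lookup m v"
proof -
  have "ydeg n m i \<noteq> 0" using assms by simp
  then show ?thesis
    using that unfolding ydeg_def sum_eq_0_iff[OF finite_vars_filter] by auto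
qed

lemma betadeg_posE:
  assumes "0 < betadeg n m k"
  obtains v where "v \<in> vars n" "k \<in> snd v" "0 < lookup m v"
proof -
  have "betadeg n m k \<noteq> 0" using assms by simp
  then show ?thesis
    using that unfolding betadeg_def sum_eq_0_iff[OF finite_vars_filter] by auto
qed

lemma ydeg_pos_if_nonzero:
  assumes "keys m \<subseteq> vars n" "m \<noteq> 0"
  shows "\<exists>i. 0 < ydeg n m i"
proof -
  obtain v where "v \<in> keys m" using assms(2) by (metis ex_in_conv keys_eq_empty)
  then have "v \<in> vars n" "0 < lookup m v" using assms(1) by (auto simp: in_keys_iff)
  then show ?thesis using lookup_le_ydeg[of v n m] by (metis less_le_trans)
qed

lemma finite_ydeg_support:
  assumes "keys m \<subseteq> vars n"
  shows "finite {i. 0 < ydeg n m i}"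
proof (rule finite_subset)
  show "{i. 0 < ydeg n m i} \<subseteq> {1..n}"
    by (auto elim!: ydeg_posE simp: vars_def)
qed simp

text \<open>The largest variable of a standard monomial, read off from its \<open>y\<close>- and \<open>\<beta>\<close>-degrees.\<close>
definition top_var :: "nat \<Rightarrow> (nat \<Rightarrow> nat) \<Rightarrow> (nat \<Rightarrow> nat) \<Rightarrow> var" where
  "top_var n a b = (Max {i. 0 < a i}, {k\<in>{1..n}. k \<noteq> Max {i. 0 < a i} \<and> 0 < b k})"

lemma vars_if_lookup_pos:
  fixes m :: "var \<Rightarrow>\<^sub>0 nat"
  assumes "keys m \<subseteq> vars n" "0 < lookup m v"
  shows "v \<in> vars n"
proof -
  have "v \<in> keys m" using assms(2) by (simp add: in_keys_iff)
  then show ?thesis using assms(1) by blast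
qed

text \<open>In a standard monomial, the largest set attached to the largest index \<open>im\<close> collects every
  \<open>k \<noteq> im\<close> that occurs at all: a variable \<open>x\<^sub>j\<^sub>|\<^sub>B\<close> with \<open>k \<in> B\<close> does not cross it.\<close>
lemma standard_top_set:
  assumes keys: "keys m \<subseteq> vars n" and st: "standard m"
    and im: "\<forall>i. 0 < ydeg n m i \<longrightarrow> i \<le> im"
    and A0: "0 < lookup m (im, A0)" and A0_max: "\<forall>A. 0 < lookup m (im, A) \<longrightarrow> card A \<le> card A0"
  shows "A0 = {k\<in>{1..n}. k \<noteq> im \<and> 0 < betadeg n m k}"
proof (intro set_eqI iffI)
  have A0_var: "(im, A0) \<in> vars n" using vars_if_lookup_pos[OF keys A0] .
  fix k
  assume k: "k \<in> A0"
  have "lookup m (im, A0) \<le> betadeg n m k" using lookup_le_betadeg[OF A0_var] k by simp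
  then show "k \<in> {k\<in>{1..n}. k \<noteq> im \<and> 0 < betadeg n m k}"
    using k A0 A0_var unfolding vars_def by auto
next
  fix k
  assume "k \<in> {k\<in>{1..n}. k \<noteq> im \<and> 0 < betadeg n m k}"
  then have "k \<noteq> im" "0 < betadeg n m k" by auto
  then obtain v where v: "v \<in> vars n" "k \<in> snd v" "0 < lookup m v"
    by (blast elim: betadeg_posE)
  obtain j B where jB: "v = (j, B)" by fastforce
  have "0 < ydeg n m j" using lookup_le_ydeg[OF v(1), of m] v(3) jB by simp
  then have "j \<le> im" using im by blast
  have "\<not> crossing (j, B) (im, A0)" using st v(3) A0 jB unfolding standard_def by blast
  then consider "j < im" "B - {im} \<subseteq> A0" | "j = im" "B \<subseteq> A0" | "j = im" "A0 \<subseteq> B"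
    using \<open>j \<le> im\<close> unfolding crossing_def by fastforce
  then show "k \<in> A0"
  proof cases
    case 3
    have "finite B" using v(1) jB vars_subset_fin_vars unfolding fin_vars_def by fastforce
    moreover have "card B \<le> card A0" using A0_max v(3) jB 3 by simp
    ultimately have "A0 = B" using 3 card_seteq by blast
    then show ?thesis using v(2) jB by simp
  qed (use v(2) jB \<open>k \<noteq> im\<close> in auto)
qed

lemma lookup_top_var_pos:
  assumes keys: "keys m \<subseteq> vars n" and st: "standard m" and "m \<noteq> 0"
  shows "0 < lookup m (top_var n (ydeg n m) (betadeg n m))"
proof -
  define im where "im = Max {i. 0 < ydeg n m i}"
  have "{i. 0 < ydeg n m i} \<noteq> {}" using ydeg_pos_if_nonzero[OF keys \<open>m \<noteq> 0\<close>] by blast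
  then have "0 < ydeg n m im" "\<forall>i. 0 < ydeg n m i \<longrightarrow> i \<le> im"
    using finite_ydeg_support[OF keys] Max_in Max_ge unfolding im_def by auto
  then obtain v where v: "v \<in> vars n" "fst v = im" "0 < lookup m v"
    by (blast elim: ydeg_posE)
  define C where "C = {A. 0 < lookup m (im, A)}"
  have "C \<subseteq> snd ` keys m"
  proof
    fix A assume "A \<in> C"
    then have "(im, A) \<in> keys m" unfolding C_def by (simp add: in_keys_iff)
    then show "A \<in> snd ` keys m" by force
  qed
  then have "finite C" by (rule finite_subset) simp
  moreover have "snd v \<in> C" using v(2,3) unfolding C_def by (cases v) simp
  ultimately have "Max (card ` C) \<in> card ` C" by (intro Max_in) auto
  then obtain A0 where "A0 \<in> C" "card A0 = Max (card ` C)" by auto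
  with \<open>finite C\<close> have "A0 \<in> C" "\<forall>A\<in>C. card A \<le> card A0" by simp_all
  then have "A0 = {k\<in>{1..n}. k \<noteq> im \<and> 0 < betadeg n m k}" "0 < lookup m (im, A0)"
    using standard_top_set[OF keys st \<open>\<forall>i. 0 < ydeg n m i \<longrightarrow> i \<le> im\<close>] unfolding C_def by auto
  then show ?thesis unfolding top_var_def im_def by simp
qed

lemma standard_diff: "standard m \<Longrightarrow> standard (m - s)"
  unfolding standard_def by (simp add: lookup_minus)

lemma keys_diff_subset: "keys ((m :: 'a \<Rightarrow>\<^sub>0 nat) - s) \<subseteq> keys m"
  by (auto simp: in_keys_iff lookup_minus)

lemma diff_single_add_single:
  "0 < lookup m v \<Longrightarrow> (m - Poly_Mapping.single v 1) + Poly_Mapping.single v (1::nat) = m"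
  by (rule poly_mapping_eqI) (auto simp: lookup_add lookup_minus lookup_single when_def)

lemma degrees_add_right_cancel:
  assumes "ydeg n (u + s) = ydeg n (u' + s)" "betadeg n (u + s) = betadeg n (u' + s)"
  shows "ydeg n u = ydeg n u'" "betadeg n u = betadeg n u'"
  using assms by (simp_all add: fun_eq_iff ydeg_add betadeg_add)

text \<open>Both monomials contain the top variable determined by the common degrees; remove it and
  induct on the degree.\<close>
lemma standard_eq_if_degrees_eq:
  assumes "keys m \<subseteq> vars n" "keys m' \<subseteq> vars n" "standard m" "standard m'"
    and "ydeg n m = ydeg n m'" "betadeg n m = betadeg n m'"
  shows "m = m'"
  using assms
proof (induction "mdeg m" arbitrary: m m')
  case 0
  then have "m = 0" by (simp add: mdeg_eq_0_iff)
  then have "ydeg n m' = ydeg n 0" using 0 by simp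
  then have "m' = 0" using ydeg_pos_if_nonzero[OF 0(3)] by (auto simp: ydeg_def)
  with \<open>m = 0\<close> show ?case by simp
next
  case (Suc N)
  then have "m \<noteq> 0" by (metis mdeg_eq_0_iff nat.distinct(1))
  moreover have "m' \<noteq> 0"
  proof
    assume "m' = 0"
    then have "ydeg n m = ydeg n 0" using Suc(7) by simp
    then show False using ydeg_pos_if_nonzero[OF Suc(3) \<open>m \<noteq> 0\<close>] by (auto simp: ydeg_def)
  qed
  define t where "t = top_var n (ydeg n m) (betadeg n m)"
  define s where "s = Poly_Mapping.single t (1::nat)"
  have "0 < lookup m t"
    unfolding t_def using lookup_top_var_pos[OF Suc(3,5) \<open>m \<noteq> 0\<close>] .
  then have m: "(m - s) + s = m"
    unfolding s_def by (rule diff_single_add_single)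
  have "0 < lookup m' t"
    unfolding t_def Suc(7,8) using lookup_top_var_pos[OF Suc(4,6) \<open>m' \<noteq> 0\<close>] .
  then have m': "(m' - s) + s = m'"
    unfolding s_def by (rule diff_single_add_single)
  have "mdeg m = mdeg (m - s) + 1"
    using mdeg_add[of "m - s" s] m by (simp add: s_def mdeg_single)
  then have deg: "N = mdeg (m - s)" using Suc(2) by simp
  have ydeg: "ydeg n (m - s) = ydeg n (m' - s)" and betadeg: "betadeg n (m - s) = betadeg n (m' - s)"
    using degrees_add_right_cancel[of n "m - s" s "m' - s", unfolded m m', OF Suc(7,8)] by simp_all
  have "m - s = m' - s"
    by (rule Suc(1)[OF deg subset_trans[OF keys_diff_subset Suc(3)]
          subset_trans[OF keys_diff_subset Suc(4)] standard_diff[OF Suc(5)] standard_diff[OF Suc(6)]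
          ydeg betadeg])
  then have "(m - s) + s = (m' - s) + s" by simp
  then show ?case unfolding m m' .
qed

lemma exists_smaller_if_not_standard:
  assumes keys: "keys u \<subseteq> vars n" and "\<not> standard u"
  obtains u' where "keys u' \<subseteq> vars n" "ydeg n u' = ydeg n u" "betadeg n u' = betadeg n u"
    "mono_less u' u"
proof -
  obtain p q where pq: "0 < lookup u p" "0 < lookup u q" "crossing p q"
    using \<open>\<not> standard u\<close> unfolding standard_def by blast
  have "p \<noteq> q" using pq(3) crossing_irrefl by metis
  have "p \<in> vars n" "q \<in> vars n" using vars_if_lookup_pos[OF keys] pq by blast+
  obtain c d where cd: "straighten p q = (c, d)" by (cases "straighten p q")
  note st = straighten_crossing[OF \<open>p \<in> vars n\<close> \<open>q \<in> vars n\<close> pq(3) cd]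
  define r where "r = u - mono2 p q"
  have u: "u = r + mono2 p q"
    unfolding r_def using pq(1,2) \<open>p \<noteq> q\<close>
    by (intro poly_mapping_eqI) (auto simp: lookup_add lookup_minus lookup_mono2)
  have "keys (r + mono2 c d) \<subseteq> vars n"
    using keys_add[of r "mono2 c d"] keys_diff_subset[of u] keys st(1,2)
    unfolding r_def keys_mono2 by blast
  moreover have "ydeg n (r + mono2 c d) = ydeg n u" "betadeg n (r + mono2 c d) = betadeg n u"
    using st(4,5) by (simp_all add: u ydeg_add betadeg_add fun_eq_iff)
  moreover have "mono_less (r + mono2 c d) u"
    unfolding u by (rule mono_less_add_left[OF st(6)])
  ultimately show ?thesis using that by blast
qed

lemma finite_monomials_mdeg_le:
  assumes "finite V"
  shows "finite {u :: 'a \<Rightarrow>\<^sub>0 nat. keys u \<subseteq> V \<and> mdeg u \<le> D}" (is "finite ?S")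
proof -
  have "lookup ` ?S \<subseteq> {f. \<forall>x. (x \<in> V \<longrightarrow> f x \<in> {0..D}) \<and> (x \<notin> V \<longrightarrow> f x = 0)}"
    using order_trans[OF lookup_le_mdeg] by (fastforce simp: in_keys_iff)
  then have "finite (lookup ` ?S)"
    by (rule finite_subset) (rule finite_set_of_finite_funs[OF assms], simp)
  moreover have "inj_on lookup ?S" by (rule inj_onI) (rule poly_mapping_eqI, simp)
  ultimately show ?thesis using finite_imageD by blast
qed

text \<open>The least monomial with the same image as \<open>m\<close> is standard (otherwise straightening would
  make it smaller), so it is \<open>m\<close>.\<close>
lemma standard_minimal_in_fiber:
  assumes keys: "keys m \<subseteq> vars n" and st: "standard m" and keys': "keys m' \<subseteq> vars n"
    and fiber: "ydeg n m' = ydeg n m" "betadeg n m' = betadeg n m"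
  shows "\<not> mono_less m' m"
proof
  assume less: "mono_less m' m"
  define S where "S = {u. keys u \<subseteq> vars n \<and> ydeg n u = ydeg n m \<and> betadeg n u = betadeg n m
                         \<and> mdeg u \<le> mdeg m}"
  have "S \<subseteq> {u. keys u \<subseteq> vars n \<and> mdeg u \<le> mdeg m}"
    unfolding S_def by blast
  then have "finite S"
    by (rule finite_subset) (rule finite_monomials_mdeg_le[OF finite_vars])
  have "S \<subseteq> fin_monos"
    unfolding S_def fin_monos_def using vars_subset_fin_vars by auto
  have "m' \<in> S" unfolding S_def using keys' fiber mono_less_mdeg[OF less] by simp
  then obtain s where s: "s \<in> S" "\<forall>u\<in>S. u \<noteq> s \<longrightarrow> mono_less s u"
    using Finite_Set.bex_least_element[OF \<open>finite S\<close> _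
        transp_on_subset[OF transp_on_mono_less \<open>S \<subseteq> fin_monos\<close>]
        totalp_on_subset[OF totalp_on_mono_less \<open>S \<subseteq> fin_monos\<close>]]
    by blast
  have "standard s"
  proof (rule ccontr)
    assume "\<not> standard s"
    moreover have "keys s \<subseteq> vars n" using s(1) unfolding S_def by simp
    ultimately obtain s' where s': "keys s' \<subseteq> vars n" "ydeg n s' = ydeg n s" "betadeg n s' = betadeg n s"
      "mono_less s' s"
      using exists_smaller_if_not_standard by blast
    then have "s' \<in> S" using s(1) mono_less_mdeg[OF s'(4)] unfolding S_def by auto
    moreover have "s' \<in> fin_monos" "s \<in> fin_monos" using \<open>s' \<in> S\<close> s(1) \<open>S \<subseteq> fin_monos\<close> by blast+
    moreover have "s' \<noteq> s" using s'(4) mono_less_irrefl by blast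
    ultimately show False
      using s(2) s'(4) mono_less_asym[of s s'] by blast
  qed
  moreover have "keys s \<subseteq> vars n" "ydeg n s = ydeg n m" "betadeg n s = betadeg n m"
    using s(1) unfolding S_def by simp_all
  ultimately have "s = m"
    using standard_eq_if_degrees_eq[OF _ keys _ st] by blast
  moreover have "m' \<noteq> m" using less mono_less_irrefl by blast
  ultimately have "mono_less m m'" using s(2) \<open>m' \<in> S\<close> by blast
  moreover have "m \<in> fin_monos" "m' \<in> fin_monos"
    using keys keys' vars_subset_fin_vars unfolding fin_monos_def by blast+
  ultimately show False using less mono_less_asym[of m m'] by blast
qed

section \<open>The image of a monomial under \<open>\<phi>\<close>\<close>

definition phi_exp :: "var \<Rightarrow> (nat + nat \<Rightarrow>\<^sub>0 nat)" where
  "phi_exp v = Poly_Mapping.single (Inl (fst v)) 1 + (\<Sum>j\<in>snd v. Poly_Mapping.single (Inr j) 1)"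

definition phi_mexp :: "(var \<Rightarrow>\<^sub>0 nat) \<Rightarrow> (nat + nat \<Rightarrow>\<^sub>0 nat)" where
  "phi_mexp m = (\<Sum>v\<in>keys m. \<Sum>_<lookup m v. phi_exp v)"

lemma prod_single_one:
  "finite S \<Longrightarrow> (\<Prod>x\<in>S. Poly_Mapping.single (g x) (1::'k::comm_ring_1)) = Poly_Mapping.single (\<Sum>x\<in>S. g x) 1"
  by (induction S rule: finite_induct) (simp_all add: mult_single)

lemma power_single_one:
  "Poly_Mapping.single e (1::'k::comm_ring_1) ^ k = Poly_Mapping.single (\<Sum>_<k. e) 1"
  by (induction k) (simp_all add: mult_single add.commute)

lemma phi_img_eq_single:
  "v \<in> fin_vars \<Longrightarrow> (phi_img v :: (nat + nat, 'k::comm_ring_1) mpoly) = Poly_Mapping.single (phi_exp v) 1"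
  unfolding phi_img_def phi_exp_def Var_def fin_vars_def
  by (simp add: prod_single_one mult_single)

lemma subst_phi_img_eq_sum_single:
  fixes p :: "(var, 'k::comm_ring_1) mpoly"
  assumes "in_vars (vars n) p"
  shows "subst phi_img p = (\<Sum>m\<in>keys p. Poly_Mapping.single (phi_mexp m) (lookup p m))"
  unfolding subst_def
proof (rule sum.cong[OF refl])
  fix m assume "m \<in> keys p"
  then have "keys m \<subseteq> fin_vars" using assms vars_subset_fin_vars unfolding in_vars_def by blast
  then have "(\<Prod>v\<in>keys m. phi_img v ^ lookup m v) =
      (\<Prod>v\<in>keys m. Poly_Mapping.single (\<Sum>_<lookup m v. phi_exp v) (1::'k))"
    by (intro prod.cong) (auto simp: phi_img_eq_single power_single_one)
  also have "\<dots> = Poly_Mapping.single (phi_mexp m) 1"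
    unfolding phi_mexp_def by (simp add: prod_single_one)
  finally show "const (lookup p m) * (\<Prod>v\<in>keys m. phi_img v ^ lookup m v) =
      Poly_Mapping.single (phi_mexp m) (lookup p m)"
    unfolding const_def by (simp add: mult_single)
qed

lemma lookup_phi_exp_Inl: "lookup (phi_exp v) (Inl i) = (if fst v = i then 1 else 0)"
  unfolding phi_exp_def by (simp add: lookup_add lookup_sum lookup_single when_def)

lemma lookup_phi_exp_Inr:
  "v \<in> fin_vars \<Longrightarrow> lookup (phi_exp v) (Inr k) = (if k \<in> snd v then 1 else 0)"
  unfolding phi_exp_def fin_vars_def by (simp add: lookup_add lookup_sum lookup_single when_def)

lemma lookup_phi_mexp:
  assumes "keys m \<subseteq> vars n"
  shows "lookup (phi_mexp m) x = (\<Sum>v\<in>vars n. lookup m v * lookup (phi_exp v) x)"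
proof -
  have "lookup (phi_mexp m) x = (\<Sum>v\<in>keys m. lookup m v * lookup (phi_exp v) x)"
    unfolding phi_mexp_def by (simp add: lookup_sum)
  also have "\<dots> = (\<Sum>v\<in>vars n. lookup m v * lookup (phi_exp v) x)"
    using assms by (intro sum.mono_neutral_left[OF finite_vars]) (auto simp: in_keys_iff)
  finally show ?thesis .
qed

lemma lookup_phi_mexp_Inl:
  assumes "keys m \<subseteq> vars n"
  shows "lookup (phi_mexp m) (Inl i) = ydeg n m i"
  unfolding lookup_phi_mexp[OF assms] lookup_phi_exp_Inl ydeg_def
  by (simp add: sum.inter_filter[OF finite_vars] if_distrib cong: if_cong)

lemma lookup_phi_mexp_Inr:
  assumes "keys m \<subseteq> vars n"
  shows "lookup (phi_mexp m) (Inr k) = betadeg n m k"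
proof -
  have "(\<Sum>v\<in>vars n. lookup m v * lookup (phi_exp v) (Inr k)) =
      (\<Sum>v\<in>vars n. if k \<in> snd v then lookup m v else 0)"
  proof (rule sum.cong[OF refl])
    fix v assume "v \<in> vars n"
    then have "v \<in> fin_vars" using vars_subset_fin_vars by blast
    then show "lookup m v * lookup (phi_exp v) (Inr k) = (if k \<in> snd v then lookup m v else 0)"
      by (simp add: lookup_phi_exp_Inr)
  qed
  then show ?thesis
    unfolding lookup_phi_mexp[OF assms] betadeg_def by (simp add: sum.inter_filter[OF finite_vars])
qed

lemma phi_mexp_eq_iff:
  assumes "keys m \<subseteq> vars n" "keys m' \<subseteq> vars n"
  shows "phi_mexp m = phi_mexp m' \<longleftrightarrow> ydeg n m = ydeg n m' \<and> betadeg n m = betadeg n m'"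
proof
  assume "phi_mexp m = phi_mexp m'"
  then show "ydeg n m = ydeg n m' \<and> betadeg n m = betadeg n m'"
    using lookup_phi_mexp_Inl lookup_phi_mexp_Inr assms by (metis ext)
next
  assume "ydeg n m = ydeg n m' \<and> betadeg n m = betadeg n m'"
  then show "phi_mexp m = phi_mexp m'"
    by (intro poly_mapping_eqI) (metis assms sum.exhaust lookup_phi_mexp_Inl lookup_phi_mexp_Inr)
qed

section \<open>The binomials of \<open>T\<close>\<close>

definition binom :: "var \<Rightarrow> var \<Rightarrow> (var, 'k::comm_ring_1) mpoly" where
  "binom p q = Var p * Var q - Var (fst (straighten p q)) * Var (snd (straighten p q))"

lemma Var_mult_Var: "(Var p * Var q :: (var, 'k::comm_ring_1) mpoly) = Poly_Mapping.single (mono2 p q) 1"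
  unfolding Var_def mono2_def by (simp add: mult_single)

lemma binom_eq: "straighten p q = (c, d) \<Longrightarrow>
    binom p q = Poly_Mapping.single (mono2 p q) 1 - Poly_Mapping.single (mono2 c d) 1"
  unfolding binom_def by (simp add: Var_mult_Var)

lemma binom_commute:
  "p \<in> vars n \<Longrightarrow> q \<in> vars n \<Longrightarrow> (binom q p :: (var, 'k::comm_ring_1) mpoly) = binom p q"
  unfolding binom_def using straighten_commute by (metis mult.commute)

lemma mono2_eq_iff:
  assumes "p \<noteq> q"
  shows "mono2 p q = mono2 x y \<longleftrightarrow> (x = p \<and> y = q) \<or> (x = q \<and> y = p)"
proof
  assume eq: "mono2 p q = mono2 x y"
  have "lookup (mono2 x y) p = 1" "lookup (mono2 x y) q = 1"
    unfolding eq[symmetric] lookup_mono2 using assms by simp_all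
  then show "(x = p \<and> y = q) \<or> (x = q \<and> y = p)"
    unfolding lookup_mono2 using assms by (cases "x = p"; cases "y = p"; cases "x = q"; cases "y = q"; simp)
next
  assume "(x = p \<and> y = q) \<or> (x = q \<and> y = p)"
  then show "mono2 p q = mono2 x y" using mono2_commute by blast
qed

lemma mdvd_mono2_imp_eq:
  assumes "p \<noteq> q" "mdvd (mono2 p q) (mono2 x y)"
  shows "mono2 p q = mono2 x y"
proof -
  have "lookup (mono2 p q) p = 1" "lookup (mono2 p q) q = 1"
    using assms(1) by (simp_all add: lookup_mono2)
  then have "1 \<le> lookup (mono2 x y) p" "1 \<le> lookup (mono2 x y) q"
    using assms(2) unfolding mdvd_def by metis+
  then have "p \<in> {x, y}" "q \<in> {x, y}"
    unfolding lookup_mono2 by (auto split: if_splits)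
  then have "(x = p \<and> y = q) \<or> (x = q \<and> y = p)"
    using assms(1) by auto
  then show ?thesis using mono2_eq_iff[OF assms(1)] by blast
qed

lemma keys_single_diff_single:
  assumes "x \<noteq> y"
  shows "keys (Poly_Mapping.single x 1 - Poly_Mapping.single y (1::'k::comm_ring_1)) = {x, y}"
proof (rule set_eqI)
  fix z
  show "z \<in> keys (Poly_Mapping.single x 1 - Poly_Mapping.single y (1::'k)) \<longleftrightarrow> z \<in> {x, y}"
    unfolding in_keys_iff using assms
    by (cases "z = x"; cases "z = y") (simp_all add: lookup_minus lookup_single)
qed

lemma binom_crossing:
  fixes p q :: var
  assumes p: "p \<in> vars n" and q: "q \<in> vars n" and cross: "crossing p q"
    and cd: "straighten p q = (c, d)"
  shows "keys (binom p q :: (var, 'k::field) mpoly) = {mono2 p q, mono2 c d}"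
    "lm (binom p q :: (var, 'k) mpoly) = mono2 p q"
    "lc (binom p q :: (var, 'k) mpoly) = 1"
    "binom p q \<in> (I_phi n :: (var, 'k) mpoly set)"
proof -
  note st = straighten_crossing[OF p q cross cd]
  have ne: "mono2 c d \<noteq> mono2 p q" using st(6) mono_less_irrefl by metis
  show keys: "keys (binom p q :: (var, 'k) mpoly) = {mono2 p q, mono2 c d}"
    unfolding binom_eq[OF cd] using ne by (simp add: keys_single_diff_single)
  have vars: "keys (mono2 p q) \<subseteq> vars n" "keys (mono2 c d) \<subseteq> vars n"
    using p q st(1,2) unfolding keys_mono2 by auto
  then have "keys (binom p q :: (var, 'k) mpoly) \<subseteq> fin_monos"
    unfolding keys fin_monos_def using vars_subset_fin_vars by blast
  then show lm: "lm (binom p q :: (var, 'k) mpoly) = mono2 p q"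
    by (rule lm_eqI) (use keys st(6) in auto)
  show "lc (binom p q :: (var, 'k) mpoly) = 1"
    unfolding lc_def lm using ne by (simp add: binom_eq[OF cd] lookup_minus lookup_single)
  have in_vars: "in_vars (vars n) (binom p q :: (var, 'k) mpoly)"
    unfolding in_vars_def keys using vars by blast
  have "subst phi_img (binom p q :: (var, 'k) mpoly) =
      Poly_Mapping.single (phi_mexp (mono2 p q)) 1 + Poly_Mapping.single (phi_mexp (mono2 c d)) (-1)"
    unfolding subst_phi_img_eq_sum_single[OF in_vars] keys using ne
    by (simp add: binom_eq[OF cd] lookup_minus lookup_single)
  also have "phi_mexp (mono2 p q) = phi_mexp (mono2 c d)"
    using phi_mexp_eq_iff[OF vars] st(4,5) by simp
  finally have "subst phi_img (binom p q :: (var, 'k) mpoly) = 0"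
    by (simp add: single_uminus)
  then show "binom p q \<in> (I_phi n :: (var, 'k) mpoly set)"
    unfolding I_phi_def using in_vars by simp
qed

lemma binom_sorted:
  "i \<le> j \<Longrightarrow> binom (i, A) (j, B) =
    Var (i, A) * Var (j, B) - Var (i, A \<inter> B \<union> ({j} \<inter> A)) * Var (j, (A - {j}) \<union> B)"
  unfolding binom_def straighten_def straighten_sorted_def by simp

lemma vars_allvars: "vars n \<subseteq> allvars n"
  unfolding vars_def allvars_def by auto

lemma binom_sorted_mem_T:
  assumes p: "(i, A) \<in> vars n" and q: "(j, B) \<in> vars n" and "i \<le> j"
    and cross: "crossing (i, A) (j, B)"
  shows "binom (i, A) (j, B) \<in> (T n :: (var, 'k::field) mpoly set)"
proof -
  have "i \<notin> A" "j \<notin> B" using p q unfolding vars_def by auto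
  have all: "(i, A) \<in> allvars n" "(j, B) \<in> allvars n" using p q vars_allvars by auto
  show ?thesis
  proof (cases "j \<in> A")
    case True
    then have "i < j" using \<open>i \<notin> A\<close> \<open>i \<le> j\<close> by (cases "i = j") auto
    moreover have "incomparable (i, A) (j, B)"
      unfolding incomparable_def leqL_def using True \<open>j \<notin> B\<close> \<open>i < j\<close> by auto
    moreover have "binom (i, A) (j, B) =
        Var (i, A) * Var (j, B) - Var (i, (A \<inter> B) \<union> {j}) * Var (j, (A - {j}) \<union> B)"
    proof -
      have "{j} \<inter> A = {j}" using True by blast
      then show ?thesis unfolding binom_sorted[OF \<open>i \<le> j\<close>] by simp
    qed
    ultimately have "binom (i, A) (j, B) \<in> (T2 n :: (var, 'k) mpoly set)"
      unfolding T2_def using all \<open>i \<notin> A\<close> \<open>j \<notin> B\<close> True by blast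
    then show ?thesis unfolding T_def by blast
  next
    case False
    have "incomparable (i, A) (j, B)"
      using cross False \<open>i \<le> j\<close> unfolding crossing_def incomparable_def leqL_def by auto
    moreover have "binom (i, A) (j, B) =
        Var (i, A) * Var (j, B) - Var (min i j, A \<inter> B) * Var (max i j, A \<union> B)"
    proof -
      have "A \<inter> B \<union> ({j} \<inter> A) = A \<inter> B" "(A - {j}) \<union> B = A \<union> B" using False by blast+
      then show ?thesis unfolding binom_sorted[OF \<open>i \<le> j\<close>] using \<open>i \<le> j\<close> by simp
    qed
    ultimately have "binom (i, A) (j, B) \<in> (G_L n :: (var, 'k) mpoly set)"
      unfolding G_L_def using all by blast
    moreover obtain c d where "straighten (i, A) (j, B) = (c, d)"
      by (cases "straighten (i, A) (j, B)")
    then have "binom (i, A) (j, B) \<in> (I_phi n :: (var, 'k) mpoly set)"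
      using binom_crossing(4)[OF p q cross] by blast
    ultimately show ?thesis unfolding T_def T1_def I_phi_def by blast
  qed
qed

lemma binom_mem_T:
  assumes "p \<in> vars n" "q \<in> vars n" "crossing p q"
  shows "binom p q \<in> (T n :: (var, 'k::field) mpoly set)"
proof (cases "fst p \<le> fst q")
  case True
  then show ?thesis using binom_sorted_mem_T[of "fst p" "snd p" n "fst q" "snd q"] assms by simp
next
  case False
  then have "binom q p \<in> (T n :: (var, 'k) mpoly set)"
    using binom_sorted_mem_T[of "fst q" "snd q" n "fst p" "snd p"] assms crossing_sym by simp
  then show ?thesis using binom_commute[OF assms(1,2), where 'k = 'k] by simp
qed

lemma G_L_sorted_eq_binom:
  fixes g :: "(var, 'k::field) mpoly"
  assumes "i \<le> j" and inc: "incomparable (i, A) (j, B)" and in_vars: "in_vars (vars n) g"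
    and g: "g = Var (i, A) * Var (j, B) - Var (i, A \<inter> B) * Var (j, A \<union> B)"
  shows "(i, A) \<in> vars n" "(j, B) \<in> vars n" "crossing (i, A) (j, B)" "g = binom (i, A) (j, B)"
proof -
  have "(i, A) \<noteq> (j, B)" using inc unfolding incomparable_def leqL_def by auto
  moreover have "leqL (i, A \<inter> B) (j, A \<union> B)" unfolding leqL_def using \<open>i \<le> j\<close> by auto
  ultimately have "mono2 (i, A) (j, B) \<noteq> mono2 (i, A \<inter> B) (j, A \<union> B)"
    using inc mono2_eq_iff unfolding incomparable_def by metis
  then have "keys g = {mono2 (i, A) (j, B), mono2 (i, A \<inter> B) (j, A \<union> B)}"
    unfolding g Var_mult_Var by (rule keys_single_diff_single)
  then have vars: "(i, A) \<in> vars n" "(j, B) \<in> vars n" "(j, A \<union> B) \<in> vars n"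
    using in_vars unfolding in_vars_def by (auto simp: keys_mono2)
  then show "(i, A) \<in> vars n" "(j, B) \<in> vars n" by simp_all
  have "j \<notin> A" using vars(3) unfolding vars_def by simp
  then show "crossing (i, A) (j, B)"
    using inc \<open>i \<le> j\<close> unfolding crossing_def incomparable_def leqL_def by auto
  have "A \<inter> B \<union> ({j} \<inter> A) = A \<inter> B" "(A - {j}) \<union> B = A \<union> B" using \<open>j \<notin> A\<close> by blast+
  then show "g = binom (i, A) (j, B)"
    unfolding g binom_sorted[OF \<open>i \<le> j\<close>] by simp
qed

lemma T_binomE:
  fixes g :: "(var, 'k::field) mpoly"
  assumes "g \<in> T n" "g \<noteq> 0"
  obtains p q where "p \<in> vars n" "q \<in> vars n" "crossing p q" "g = binom p q"
proof (cases "g \<in> T1 n")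
  case True
  then obtain i A j B where "incomparable (i, A) (j, B)" "in_vars (vars n) g"
    and g: "g = Var (i, A) * Var (j, B) - Var (min i j, A \<inter> B) * Var (max i j, A \<union> B)"
    unfolding T1_def G_L_def by blast
  then consider "i \<le> j" "incomparable (i, A) (j, B)"
      "g = Var (i, A) * Var (j, B) - Var (i, A \<inter> B) * Var (j, A \<union> B)"
    | "j \<le> i" "incomparable (j, B) (i, A)"
      "g = Var (j, B) * Var (i, A) - Var (j, B \<inter> A) * Var (i, B \<union> A)"
    unfolding incomparable_def by (cases "i \<le> j") (auto simp: mult.commute Int_commute Un_commute)
  then show ?thesis
  proof cases
    case 1
    then show ?thesis using that G_L_sorted_eq_binom[OF 1(1,2) \<open>in_vars (vars n) g\<close> 1(3)] by blast
  next
    case 2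
    then show ?thesis using that G_L_sorted_eq_binom[OF 2(1,2) \<open>in_vars (vars n) g\<close> 2(3)] by blast
  qed
next
  case False
  then obtain i A j B where all: "(i, A) \<in> allvars n" "(j, B) \<in> allvars n"
    and "i < j" "i \<notin> A" "j \<notin> B" "j \<in> A"
    and g: "g = Var (i, A) * Var (j, B) - Var (i, (A \<inter> B) \<union> {j}) * Var (j, (A - {j}) \<union> B)"
    using assms(1) unfolding T_def T2_def by blast
  have vars: "(i, A) \<in> vars n" "(j, B) \<in> vars n"
    using all \<open>i \<notin> A\<close> \<open>j \<notin> B\<close> unfolding allvars_def vars_def by auto
  have "\<not> A - {j} \<subseteq> B"
  proof
    assume "A - {j} \<subseteq> B"
    then have "(A \<inter> B) \<union> {j} = A" "(A - {j}) \<union> B = B" using \<open>j \<in> A\<close> by blast+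
    then show False using g assms(2) by simp
  qed
  then have "crossing (i, A) (j, B)" unfolding crossing_def using \<open>i < j\<close> by simp
  moreover have "{j} \<inter> A = {j}" using \<open>j \<in> A\<close> by blast
  then have "g = binom (i, A) (j, B)"
    unfolding g binom_sorted[OF less_imp_le[OF \<open>i < j\<close>]] by simp
  ultimately show ?thesis using that vars by blast
qed

section \<open>The Groebner basis\<close>

lemma in_vars_lm:
  assumes "in_vars (vars n) f" "f \<noteq> 0"
  shows "keys f \<subseteq> fin_monos" "lm f \<in> keys f" "keys (lm f) \<subseteq> vars n"
proof -
  show "keys f \<subseteq> fin_monos"
    using assms(1) vars_subset_fin_vars unfolding in_vars_def fin_monos_def by blast
  then show "lm f \<in> keys f" using lm_greatest(1) assms(2) by blast
  then show "keys (lm f) \<subseteq> vars n" using assms(1) unfolding in_vars_def by blast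
qed

text \<open>The term of \<open>\<phi>(f)\<close> at the image of \<open>lm f\<close> could only cancel against a smaller monomial
  with the same image, which cannot exist if \<open>lm f\<close> is standard.\<close>
lemma lm_not_standard_if_mem_I_phi:
  fixes f :: "(var, 'k::field) mpoly"
  assumes "f \<in> I_phi n" "f \<noteq> 0"
  shows "\<not> standard (lm f)"
proof
  assume st: "standard (lm f)"
  have in_vars: "in_vars (vars n) f" and "subst phi_img f = 0" using assms(1) unfolding I_phi_def by auto
  note lm = in_vars_lm[OF in_vars assms(2)]
  have "\<exists>m\<in>keys f. m \<noteq> lm f \<and> phi_mexp m = phi_mexp (lm f)"
  proof (rule ccontr)
    assume none: "\<not> (\<exists>m\<in>keys f. m \<noteq> lm f \<and> phi_mexp m = phi_mexp (lm f))"
    have "0 = lookup (subst phi_img f) (phi_mexp (lm f))"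
      using \<open>subst phi_img f = 0\<close> by simp
    also have "\<dots> = (\<Sum>m\<in>keys f. if m = lm f then lookup f m else 0)"
      unfolding subst_phi_img_eq_sum_single[OF in_vars] lookup_sum
      using none by (intro sum.cong) (auto simp: lookup_single when_def)
    also have "\<dots> = lookup f (lm f)" using lm(2) by simp
    finally show False using lm(2) by (simp add: in_keys_iff)
  qed
  then obtain m where m: "m \<in> keys f" "m \<noteq> lm f" "phi_mexp m = phi_mexp (lm f)" by blast
  have "keys m \<subseteq> vars n" using m(1) in_vars unfolding in_vars_def by blast
  then have "ydeg n m = ydeg n (lm f)" "betadeg n m = betadeg n (lm f)"
    using phi_mexp_eq_iff m(3) lm(3) by blast+
  then have "\<not> mono_less m (lm f)"
    using standard_minimal_in_fiber[OF lm(3) st \<open>keys m \<subseteq> vars n\<close>] by blast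
  moreover have "mono_less m (lm f)"
    using lm_greatest(2)[OF assms(2) lm(1)] m(1,2) by blast
  ultimately show False by contradiction
qed

lemma mdvd_mono2_if_not_standard:
  assumes keys: "keys u \<subseteq> vars n" and "\<not> standard u"
  obtains p q where "p \<in> vars n" "q \<in> vars n" "crossing p q" "mdvd (mono2 p q) u"
proof -
  obtain p q where pq: "0 < lookup u p" "0 < lookup u q" "crossing p q"
    using \<open>\<not> standard u\<close> unfolding standard_def by blast
  have "p \<noteq> q" using pq(3) crossing_irrefl by metis
  then have "mdvd (mono2 p q) u"
    unfolding mdvd_def lookup_mono2 using pq(1,2) by auto
  then show ?thesis using that vars_if_lookup_pos[OF keys] pq by blast
qed

lemma lm_mem_I_phi_divisible:
  fixes f :: "(var, 'k::field) mpoly"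
  assumes "f \<in> I_phi n" "f \<noteq> 0"
  shows "\<exists>g\<in>T n - {0} :: (var, 'k) mpoly set. mdvd (lm g) (lm f)"
proof -
  have "in_vars (vars n) f" using assms(1) unfolding I_phi_def by simp
  then have "keys (lm f) \<subseteq> vars n" using in_vars_lm(3) assms(2) by blast
  then obtain p q where pq: "p \<in> vars n" "q \<in> vars n" "crossing p q" "mdvd (mono2 p q) (lm f)"
    using lm_not_standard_if_mem_I_phi[OF assms] by (rule mdvd_mono2_if_not_standard)
  obtain c d where cd: "straighten p q = (c, d)" by (cases "straighten p q")
  have "binom p q \<in> (T n :: (var, 'k) mpoly set)" using binom_mem_T[OF pq(1-3)] .
  moreover have "binom p q \<noteq> (0 :: (var, 'k) mpoly)"
    using binom_crossing(1)[OF pq(1-3) cd, where 'k = 'k] by auto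
  moreover have "lm (binom p q :: (var, 'k) mpoly) = mono2 p q"
    using binom_crossing(2)[OF pq(1-3) cd] .
  ultimately show ?thesis using pq(4) by (intro bexI[of _ "binom p q"]) simp_all
qed

lemma T_interreduced:
  fixes g h :: "(var, 'k::field) mpoly"
  assumes g: "g \<in> T n - {0}" and h: "h \<in> T n - {0}" and "g \<noteq> h" and m: "m \<in> keys g"
  shows "\<not> mdvd (lm h) m"
proof
  assume dvd: "mdvd (lm h) m"
  from g obtain p q where pq: "p \<in> vars n" "q \<in> vars n" "crossing p q" "g = binom p q"
    by (auto elim: T_binomE)
  from h obtain p' q' where pq': "p' \<in> vars n" "q' \<in> vars n" "crossing p' q'" "h = binom p' q'"
    by (auto elim: T_binomE)
  obtain c d where cd: "straighten p q = (c, d)" by (cases "straighten p q")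
  obtain c' d' where cd': "straighten p' q' = (c', d')" by (cases "straighten p' q'")
  have "p' \<noteq> q'" using pq'(3) crossing_irrefl by metis
  have dvd': "mdvd (mono2 p' q') m"
    using dvd binom_crossing(2)[OF pq'(1-3) cd', where 'k = 'k] pq'(4) by simp
  have "m = mono2 p q \<or> m = mono2 c d"
    using m binom_crossing(1)[OF pq(1-3) cd, where 'k = 'k] pq(4) by simp
  then consider "mono2 p' q' = mono2 p q" | "mono2 p' q' = mono2 c d"
    using mdvd_mono2_imp_eq[OF \<open>p' \<noteq> q'\<close>] dvd' by (elim disjE) simp_all
  then show False
  proof cases
    case 1
    then have "(p = p' \<and> q = q') \<or> (p = q' \<and> q = p')"
      using mono2_eq_iff[OF \<open>p' \<noteq> q'\<close>, of p q] by blast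
    then have "h = g"
      using pq(4) pq'(4) binom_commute[OF pq'(1,2), where 'k = 'k] by (elim disjE) simp_all
    with \<open>g \<noteq> h\<close> show False by simp
  next
    case 2
    then have "(c = p' \<and> d = q') \<or> (c = q' \<and> d = p')"
      using mono2_eq_iff[OF \<open>p' \<noteq> q'\<close>, of c d] by blast
    then have "crossing c d" using pq'(3) crossing_sym by blast
    then show False using straighten_crossing(3)[OF pq(1-3) cd] by simp
  qed
qed

lemma finite_T_minus_zero: "finite (T n - {0} :: (var, 'k::field) mpoly set)"
proof (rule finite_subset)
  show "T n - {0} \<subseteq> (\<lambda>(p, q). binom p q :: (var, 'k) mpoly) ` (vars n \<times> vars n)"
    by (force elim: T_binomE)
qed (simp add: finite_vars)

theorem theorem3p6:
  fixes n :: nat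
  shows "(I_phi n :: (var, 'k::field) mpoly set) = I_phi' n \<inter> {p. in_vars (vars n) p}
         \<and> is_reduced_GB (I_phi n) (T n - {0} :: (var, 'k::field) mpoly set)"
proof
  have "in_vars (allvars n) p" if "in_vars (vars n) p" for p :: "(var, 'k) mpoly"
    using that vars_allvars unfolding in_vars_def by blast
  then show "(I_phi n :: (var, 'k) mpoly set) = I_phi' n \<inter> {p. in_vars (vars n) p}"
    unfolding I_phi_def I_phi'_def by auto
  let ?G = "T n - {0} :: (var, 'k) mpoly set"
  have "g \<in> I_phi n \<and> g \<noteq> 0 \<and> lc g = 1" if g: "g \<in> ?G" for g
  proof -
    from g have "g \<in> T n" "g \<noteq> 0" by auto
    then obtain p q where pq: "p \<in> vars n" "q \<in> vars n" "crossing p q" "g = binom p q"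
      by (rule T_binomE)
    obtain c d where cd: "straighten p q = (c, d)" by (cases "straighten p q")
    show ?thesis using binom_crossing(3,4)[OF pq(1-3) cd] pq(4) \<open>g \<noteq> 0\<close> by simp
  qed
  moreover have "\<forall>f\<in>I_phi n :: (var, 'k) mpoly set. f \<noteq> 0 \<longrightarrow> (\<exists>g\<in>?G. mdvd (lm g) (lm f))"
    by (intro ballI impI lm_mem_I_phi_divisible)
  moreover have "\<forall>g\<in>?G. \<forall>h\<in>?G. g \<noteq> h \<longrightarrow> (\<forall>m\<in>keys g. \<not> mdvd (lm h) m)"
    by (intro ballI impI T_interreduced)
  ultimately show "is_reduced_GB (I_phi n) ?G"
    unfolding is_reduced_GB_def using finite_T_minus_zero by auto
qed

end
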